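(* Let $K\ge3$, $N\ge1$, let $\mathcal{D}_1,\dots,\mathcal{D}_K$ be subpopulations and $\mathcal{A}$ a learning algorithm, and assume the tasks are independent, i.e. each error function $e_k$ depends only on $n_k$. If there exists $k\in[K]$ such that $e_k$ is not a constant function on $[N]=\{1,\dots,N\}$, then there exists a set $U\subseteq\Delta_K$ of measure zero such that for all ${\bm{p}}\in\Delta_K\setminus U$ there is ${\bm{q}}^*\neq{\bm{p}}$ with $$L_N({\bm{p}},{\bm{q}}^* )=L^*({\bm{p}})<L^{\mathrm{same}}({\bm{p}}).$$
   Context: Setting: distributions $\mathcal{D}_1,\dots,\mathcal{D}_K$ on $\mathcal{Z}$, a loss $\ell(h,{\bm{z}})$ and a learning algorithm $\mathcal{A}$ mapping datasets in $\mathcal{Z}^N$ to models. For ${\bm{n}}\in\mathbb{Z}_{\ge0}^K$ with $\sum_kn_k=N$, let $\boldsymbol{\mathcal{D}}^{\bm{n}}=\mathcal{D}_1^{n_1}\times\dots\times\mathcal{D}_K^{n_K}$ and $e_k({\bm{n}})=\mathbb{E}_{S\sim\boldsymbol{\mathcal{D}}^{\bm{n}}}\mathbb{E}_{{\bm{z}}\sim\mathcal{D}_k}[\ell(\mathcal{A}(S),{\bm{z}})]$; independence means $e_k({\bm{n}})=e_k(n_k)$. For ${\bm{q}}\in\Delta_K=\{{\bm{r}}\ge0:\sum_kr_k=1\}$, training on $N$ i.i.d. samples from $\sum_kq_k\mathcal{D}_k$ gives ${\bm{n}}\sim\mathrm{Mult}(N,{\bm{q}})$ and expected test loss $L_N({\bm{p}},{\bm{q}})=\sum_kp_k\mathbb{E}_{{\bm{n}}\sim\mathrm{Mult}(N,{\bm{q}})}[e_k(n_k)]$;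 $L^{\mathrm{same}}({\bm{p}})=L_N({\bm{p}},{\bm{p}})$ and $L^*({\bm{p}})=\min_{{\bm{q}}\in\Delta_K}L_N({\bm{p}},{\bm{q}})$. Measure on $\Delta_K$ is Lebesgue measure on the simplex. *)

theory Defs
  imports "HOL-Analysis.Analysis"
begin

definition prob_simplex :: "nat \<Rightarrow> (nat \<Rightarrow> real) set" where
  "prob_simplex K = {p. (\<forall>i<K. 0 \<le> p i) \<and> (\<forall>i. K \<le> i \<longrightarrow> p i = 0) \<and> (\<Sum>i<K. p i) = 1}"

definition compositions :: "nat \<Rightarrow> nat \<Rightarrow> (nat \<Rightarrow> nat) set" where
  "compositions K N = {n. (\<forall>i. K \<le> i \<longrightarrow> n i = 0) \<and> (\<Sum>i<K. n i) = N}"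

definition mult_pmf :: "nat \<Rightarrow> nat \<Rightarrow> (nat \<Rightarrow> real) \<Rightarrow> (nat \<Rightarrow> nat) \<Rightarrow> real" where
  "mult_pmf K N q n = fact N / (\<Prod>i<K. fact (n i)) * (\<Prod>i<K. q i ^ n i)"

text \<open>Expected test loss L_N(p,q) under independence: e k m is e_k(m).\<close>

definition L_N :: "nat \<Rightarrow> nat \<Rightarrow> (nat \<Rightarrow> nat \<Rightarrow> real) \<Rightarrow> (nat \<Rightarrow> real) \<Rightarrow> (nat \<Rightarrow> real) \<Rightarrow> real" where
  "L_N K N e p q = (\<Sum>k<K. p k * (\<Sum>n\<in>compositions K N. mult_pmf K N q n * e k (n k)))"

definition L_same :: "nat \<Rightarrow> nat \<Rightarrow> (nat \<Rightarrow> nat \<Rightarrow> real) \<Rightarrow> (nat \<Rightarrow> real) \<Rightarrow> real" where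
  "L_same K N e p = L_N K N e p p"

definition L_star :: "nat \<Rightarrow> nat \<Rightarrow> (nat \<Rightarrow> nat \<Rightarrow> real) \<Rightarrow> (nat \<Rightarrow> real) \<Rightarrow> real" where
  "L_star K N e p = (INF q\<in>prob_simplex K. L_N K N e p q)"

text \<open>Lebesgue measure on the simplex: via the chart sending x in R^{K-1}
  (coordinates 0..K-2) to (x_0,...,x_{K-2}, 1 - sum x_j).\<close>

definition simplex_chart :: "nat \<Rightarrow> (nat \<Rightarrow> real) \<Rightarrow> (nat \<Rightarrow> real)" where
  "simplex_chart K x = (\<lambda>i. if i < K - 1 then x i
                            else if i = K - 1 then 1 - (\<Sum>j<K - 1. x j) else 0)"

definition simplex_null :: "nat \<Rightarrow> (nat \<Rightarrow> real) set \<Rightarrow> bool" where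
  "simplex_null K U \<longleftrightarrow>
     {x \<in> space (Pi\<^sub>M {..<K - 1} (\<lambda>_. lborel)). simplex_chart K x \<in> U}
       \<in> null_sets (Pi\<^sub>M {..<K - 1} (\<lambda>_. lborel))"

end

theory Submission
  imports Defs "HOL-Computational_Algebra.Polynomial"
begin

(* Under independence the k-th summand of L_N(p,q) only sees the binomial marginal
   n_k ~ Bin(N, q_k), so L_N(p,q) = sum_k p_k F_k(q_k), where F_k is the Bernstein polynomial
   with coefficients e_k(0), ..., e_k(N); it is nonconstant as soon as e_k is.
   At an interior p, shifting mass from coordinate b to coordinate a changes L_N(p,-) at rate
   p_a F_a'(p_a) - p_b F_b'(p_b), so p is not a minimiser unless these two gains agree.
   Take a with F_a nonconstant and b distinct from a and from the last coordinate.  The boundary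
   and the set where the gains at a and b agree are null: some chart coordinate moves p_a
   affinely but leaves p_b fixed (this needs K >= 3), and along it the nonzero polynomial
   t F_a'(t) takes each value only finitely often. *)

section \<open>Multinomial marginals\<close>

lemma compositions_0: "compositions 0 N = (if N = 0 then {\<lambda>_. 0} else {})"
  by (auto simp: compositions_def)

lemma compositions_Suc:
  "compositions (Suc K) N = (\<lambda>(m, n). n(K := m)) ` (SIGMA m:{..N}. compositions K (N - m))"
proof (rule set_eqI, rule iffI)
  fix n assume n: "n \<in> compositions (Suc K) N"
  have sum_n: "(\<Sum>i<K. n i) + n K = N" using n by (simp add: compositions_def)
  have "(\<Sum>i<K. (n(K := 0)) i) = (\<Sum>i<K. n i)" by (rule sum.cong) auto
  then have "n(K := 0) \<in> compositions K (N - n K)" using n sum_n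
    by (auto simp: compositions_def)
  then show "n \<in> (\<lambda>(m, n). n(K := m)) ` (SIGMA m:{..N}. compositions K (N - m))"
    using sum_n by (intro image_eqI[where x = "(n K, n(K := 0))"]) auto
next
  fix n assume "n \<in> (\<lambda>(m, n). n(K := m)) ` (SIGMA m:{..N}. compositions K (N - m))"
  then obtain m n' where "m \<le> N" "n' \<in> compositions K (N - m)" "n = n'(K := m)" by auto
  moreover have "(\<Sum>i<K. (n'(K := m)) i) = (\<Sum>i<K. n' i)" by (rule sum.cong) auto
  ultimately show "n \<in> compositions (Suc K) N" by (auto simp: compositions_def)
qed

lemma inj_on_compositions_Suc:
  "inj_on (\<lambda>(m, n). n(K := m)) (SIGMA m:{..N}. compositions K (N - m))"
proof (rule inj_onI, clarsimp)
  fix m n m' n' assume "n \<in> compositions K (N - m)" "n' \<in> compositions K (N - m')"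
    and upd: "n(K := m) = n'(K := m')"
  then have "n K = 0" "n' K = 0" by (auto simp: compositions_def)
  then have "n = n'" using upd by (metis fun_upd_triv fun_upd_upd)
  then show "m = m' \<and> n = n'" using fun_cong[OF upd, of K] by simp
qed

lemma finite_compositions: "finite (compositions K N)"
  by (induction K arbitrary: N) (simp_all add: compositions_0 compositions_Suc)

lemma multinomial_theorem:
  fixes y :: "nat \<Rightarrow> 'a::field_char_0"
  shows "(\<Sum>n\<in>compositions K N. fact N / (\<Prod>i<K. fact (n i)) * (\<Prod>i<K. y i ^ n i))
    = (\<Sum>i<K. y i) ^ N"
proof (induction K arbitrary: N)
  case 0
  then show ?case by (simp add: compositions_0)
next
  case (Suc K)
  have split_last: "fact N / (\<Prod>i<Suc K. fact ((n(K := m)) i)) * (\<Prod>i<Suc K. y i ^ (n(K := m)) i)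
      = of_nat (N choose m) * y K ^ m * (fact (N - m) / (\<Prod>i<K. fact (n i)) * (\<Prod>i<K. y i ^ n i))"
    if "m \<le> N" for m and n :: "nat \<Rightarrow> nat"
  proof -
    have "(\<Prod>i<K. fact ((n(K := m)) i)) = (\<Prod>i<K. (fact (n i) :: 'a))"
      "(\<Prod>i<K. y i ^ (n(K := m)) i) = (\<Prod>i<K. y i ^ n i)"
      by (auto intro: prod.cong)
    then show ?thesis using that by (simp add: binomial_fact field_simps)
  qed
  have "(\<Sum>n\<in>compositions (Suc K) N. fact N / (\<Prod>i<Suc K. fact (n i)) * (\<Prod>i<Suc K. y i ^ n i))
      = (\<Sum>m\<le>N. \<Sum>n\<in>compositions K (N - m).
           fact N / (\<Prod>i<Suc K. fact ((n(K := m)) i)) * (\<Prod>i<Suc K. y i ^ (n(K := m)) i))"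
    unfolding compositions_Suc sum.reindex[OF inj_on_compositions_Suc]
    by (subst sum.Sigma) (auto simp: finite_compositions case_prod_unfold)
  also have "\<dots> = (\<Sum>m\<le>N. of_nat (N choose m) * y K ^ m * (\<Sum>n\<in>compositions K (N - m).
           fact (N - m) / (\<Prod>i<K. fact (n i)) * (\<Prod>i<K. y i ^ n i)))"
    unfolding sum_distrib_left by (intro sum.cong refl split_last) auto
  also have "\<dots> = (\<Sum>m\<le>N. of_nat (N choose m) * y K ^ m * (\<Sum>i<K. y i) ^ (N - m))"
    by (simp only: Suc.IH)
  also have "\<dots> = (y K + (\<Sum>i<K. y i)) ^ N"
    by (rule binomial_ring[symmetric])
  finally show ?case by (simp add: add.commute)
qed

lemma sum_mult_pmf_pow_coord:
  fixes q :: "nat \<Rightarrow> real"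
  assumes "k < K"
  shows "(\<Sum>n\<in>compositions K N. mult_pmf K N q n * z ^ n k) = (q k * z + ((\<Sum>i<K. q i) - q k)) ^ N"
proof -
  define y where "y = q(k := q k * z)"
  have sum_y: "(\<Sum>i<K. y i) = q k * z + ((\<Sum>i<K. q i) - q k)"
    using assms by (simp add: y_def sum.remove[of "{..<K}" k])
  have "(\<Sum>n\<in>compositions K N. mult_pmf K N q n * z ^ n k)
      = (\<Sum>n\<in>compositions K N. fact N / (\<Prod>i<K. fact (n i)) * (\<Prod>i<K. y i ^ n i))"
    using assms by (simp add: mult_pmf_def y_def prod.remove[of "{..<K}" k] power_mult_distrib mult_ac)
  also have "\<dots> = (\<Sum>i<K. y i) ^ N" by (rule multinomial_theorem)
  finally show ?thesis by (simp only: sum_y)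
qed

lemma sum_mult_pmf_marginal:
  fixes q :: "nat \<Rightarrow> real"
  assumes k: "k < K" and q: "(\<Sum>i<K. q i) = 1"
  shows "(\<Sum>n\<in>compositions K N. mult_pmf K N q n * g (n k)) = (\<Sum>m\<le>N. g m * Bernstein N m (q k))"
proof -
  define A where "A m = (\<Sum>n | n \<in> compositions K N \<and> n k = m. mult_pmf K N q n)" for m
  have "(\<lambda>n. n k) ` compositions K N \<subseteq> {..N}"
    using k member_le_sum[of k "{..<K}"] by (auto simp: compositions_def)
  then have by_marginal:
    "(\<Sum>n\<in>compositions K N. mult_pmf K N q n * h (n k)) = (\<Sum>m\<le>N. A m * h m)" for h
    unfolding A_def sum_distrib_right
    by (subst sum.group[OF finite_compositions, symmetric]) (auto intro!: sum.cong)
  \<comment> \<open>A is the law of n k; it is identified through its generating function.\<close>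
  have "(\<Sum>m\<le>N. A m * z ^ m) = (\<Sum>m\<le>N. Bernstein N m (q k) * z ^ m)" for z :: real
  proof -
    have "(\<Sum>m\<le>N. A m * z ^ m) = (q k * z + (1 - q k)) ^ N"
      using by_marginal[of "\<lambda>m. z ^ m"] sum_mult_pmf_pow_coord[OF k] q by simp
    also have "\<dots> = (\<Sum>m\<le>N. Bernstein N m (q k) * z ^ m)"
      unfolding binomial_ring Bernstein_def by (simp add: power_mult_distrib ac_simps)
    finally show ?thesis .
  qed
  then have "\<forall>m\<le>N. A m = Bernstein N m (q k)"
    using polyfun_eq_coeffs[of A N "\<lambda>m. Bernstein N m (q k)"] by blast
  then show ?thesis unfolding by_marginal by (simp add: mult.commute)
qed

section \<open>Bernstein polynomials\<close>

definition bernstein_poly :: "nat \<Rightarrow> (nat \<Rightarrow> real) \<Rightarrow> real poly" where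
  "bernstein_poly N c = (\<Sum>m\<le>N. smult (c m * of_nat (N choose m)) ([:0, 1:] ^ m * [:1, -1:] ^ (N - m)))"

lemma poly_bernstein_poly: "poly (bernstein_poly N c) t = (\<Sum>m\<le>N. c m * Bernstein N m t)"
  by (simp add: bernstein_poly_def Bernstein_def poly_sum algebra_simps)

lemma L_N_eq_sum_bernstein_poly:
  assumes "(\<Sum>i<K. q i) = 1"
  shows "L_N K N e p q = (\<Sum>k<K. p k * poly (bernstein_poly N (e k)) (q k))"
  unfolding L_N_def poly_bernstein_poly
  using assms by (intro sum.cong refl) (simp add: sum_mult_pmf_marginal)

lemma Bernstein_rescale:
  assumes "0 \<le> x"
  shows "(1 + x) ^ N * Bernstein N m (x / (1 + x)) = of_nat (N choose m) * x ^ m"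
proof (cases "m \<le> N")
  case True
  have "1 - x / (1 + x) = 1 / (1 + x)" using assms by (simp add: field_simps)
  then have "(1 + x) ^ N * Bernstein N m (x / (1 + x))
      = of_nat (N choose m) * x ^ m * ((1 + x) ^ (m + (N - m)) / ((1 + x) ^ m * (1 + x) ^ (N - m)))"
    using True by (simp add: Bernstein_def power_divide)
  also have "\<dots> = of_nat (N choose m) * x ^ m" using assms by (simp add: power_add)
  finally show ?thesis .
qed (simp add: Bernstein_def)

lemma Bernstein_coeffs_eq_0:
  assumes zero: "\<And>t. 0 < t \<Longrightarrow> t < 1 \<Longrightarrow> (\<Sum>m\<le>N. c m * Bernstein N m t) = 0" and "m \<le> N"
  shows "c m = 0"
proof -
  define d where "d m = c m * of_nat (N choose m)" for m
  have "(\<Sum>m\<le>N. d m * x ^ m) = 0" if "0 < x" for x :: real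
  proof -
    have "(\<Sum>m\<le>N. d m * x ^ m) = (1 + x) ^ N * (\<Sum>m\<le>N. c m * Bernstein N m (x / (1 + x)))"
      unfolding sum_distrib_left d_def using that
      by (intro sum.cong refl) (simp add: Bernstein_rescale mult.left_commute)
    also have "\<dots> = 0" using that by (simp add: zero)
    finally show ?thesis .
  qed
  then have "{0<..} \<subseteq> {x::real. (\<Sum>m\<le>N. d m * x ^ m) = 0}" by auto
  then have "infinite {x::real. (\<Sum>m\<le>N. d m * x ^ m) = 0}"
    using infinite_Ioi finite_subset by blast
  then show ?thesis using polyfun_finite_roots[of d N] assms(2) by (auto simp: d_def)
qed

lemma pderiv_bernstein_poly_nonzero:
  assumes "a \<le> N" "b \<le> N" "c a \<noteq> c b"
  shows "pderiv (bernstein_poly N c) \<noteq> 0"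
proof
  assume "pderiv (bernstein_poly N c) = 0"
  then obtain h where h: "bernstein_poly N c = [:h:]" using pderiv_iszero by blast
  have "(\<Sum>m\<le>N. c m * Bernstein N m 0) = c 0"
    by (simp add: Bernstein_def power_0_left if_distrib[of "\<lambda>x. _ * x"] cong: if_cong)
  then have "h = c 0" using poly_bernstein_poly[of N c 0] by (simp add: h)
  then have zero: "(\<Sum>m\<le>N. (c m - c 0) * Bernstein N m t) = 0" for t
    using poly_bernstein_poly[of N c t]
    by (simp add: h left_diff_distrib sum_subtractf flip: sum_distrib_left)
  have "c m - c 0 = 0" if "m \<le> N" for m
    by (rule Bernstein_coeffs_eq_0[where N = N and c = "\<lambda>m. c m - c 0"]) (simp_all add: zero that)
  then show False using assms by (metis right_minus_eq)
qed

lemma finite_level_set_x_mult_poly: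
  fixes P :: "'a::idom poly"
  assumes "P \<noteq> 0"
  shows "finite {t. t * poly P t = c}"
proof -
  have "{t. t * poly P t = c} = {t. poly (pCons (- c) P) t = 0}" by auto
  then show ?thesis using poly_roots_finite[of "pCons (- c) P"] assms by simp
qed

section \<open>Null sets of the simplex\<close>

abbreviation chart_space :: "nat \<Rightarrow> (nat \<Rightarrow> real) measure" where
  "chart_space K \<equiv> Pi\<^sub>M {..<K - 1} (\<lambda>_. lborel)"

lemma null_sets_PiM_lborel_if_finite_slices:
  assumes "finite I" "i \<in> I" and S: "S \<in> sets (Pi\<^sub>M I (\<lambda>_. lborel))"
    and slices: "\<And>x. finite {t. x(i := t) \<in> S}"
  shows "S \<in> null_sets (Pi\<^sub>M I (\<lambda>_. lborel))"
proof -
  interpret product_sigma_finite "\<lambda>_. lborel" by standard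
  define J where "J = I - {i}"
  have J: "I = insert i J" "i \<notin> J" "finite J" using assms(1,2) by (auto simp: J_def)
  have slice_integral: "(\<integral>\<^sup>+ t. indicator S (x(i := t)) \<partial>lborel) = 0" for x
  proof -
    have null: "{t. x(i := t) \<in> S} \<in> null_sets lborel"
      using slices by (intro countable_imp_null_set_lborel countable_finite)
    have "(\<integral>\<^sup>+ t. indicator S (x(i := t)) \<partial>lborel) = (\<integral>\<^sup>+ t. indicator {t. x(i := t) \<in> S} t \<partial>lborel)"
      by (simp add: indicator_def)
    also have "\<dots> = emeasure lborel {t. x(i := t) \<in> S}"
      using null_setsD2[OF null] by (rule nn_integral_indicator)
    finally show ?thesis using null_setsD1[OF null] by simp
  qed
  have "emeasure (Pi\<^sub>M I (\<lambda>_. lborel)) S = (\<integral>\<^sup>+ x. indicator S x \<partial>Pi\<^sub>M I (\<lambda>_. lborel))"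
    using S by simp
  also have "\<dots> = (\<integral>\<^sup>+ x. (\<integral>\<^sup>+ t. indicator S (x(i := t)) \<partial>lborel) \<partial>Pi\<^sub>M J (\<lambda>_. lborel))"
    unfolding J(1) using S J by (intro product_nn_integral_insert) auto
  also have "\<dots> = 0" by (simp add: slice_integral)
  finally show ?thesis using S by (simp add: null_sets_def)
qed

lemma measurable_simplex_chart_coord:
  "(\<lambda>x. simplex_chart K x i) \<in> borel_measurable (chart_space K)"
  by (cases "i < K - 1"; cases "i = K - 1") (simp_all add: simplex_chart_def)

lemma simplex_chart_in_prob_simplex:
  assumes "0 < K"
  shows "simplex_chart K x \<in> prob_simplex K \<longleftrightarrow> (\<forall>i<K. 0 \<le> simplex_chart K x i)"
proof -
  have "{..<K} = insert (K - 1) {..<K - 1}" using assms by auto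
  then have "(\<Sum>i<K. simplex_chart K x i) = 1" by (simp add: simplex_chart_def)
  then show ?thesis by (auto simp: prob_simplex_def simplex_chart_def)
qed

lemma simplex_chart_upd_other:
  "k \<noteq> i \<Longrightarrow> k \<noteq> K - 1 \<Longrightarrow> simplex_chart K (x(i := t)) k = simplex_chart K x k"
  by (simp add: simplex_chart_def)

lemma inj_simplex_chart_upd:
  assumes "i < K - 1" "k = i \<or> k = K - 1"
  shows "inj (\<lambda>t. simplex_chart K (x(i := t)) k)"
proof -
  have "(\<Sum>j<K - 1. (x(i := t)) j) = t + (\<Sum>j\<in>{..<K - 1} - {i}. x j)" for t
    using assms(1) by (subst sum.remove[of _ i]) auto
  then show ?thesis using assms by (auto simp: inj_def simplex_chart_def)
qed

text \<open>The chart coordinate K - 1 is the dependent one, 1 - sum of the others; it moves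
  affinely with every chart coordinate i, just like coordinate i itself.\<close>

lemma null_sets_simplex_chart_level_set:
  fixes f :: "real \<Rightarrow> real" and G :: "(nat \<Rightarrow> real) \<Rightarrow> real"
  assumes i: "i < K - 1" "k = i \<or> k = K - 1"
    and f: "f \<in> borel_measurable borel" "\<And>c. finite {t. f t = c}"
    and G: "G \<in> borel_measurable (chart_space K)" "\<And>x t. G (x(i := t)) = G x"
  shows "{x \<in> space (chart_space K). f (simplex_chart K x k) = G x} \<in> null_sets (chart_space K)"
proof (rule null_sets_PiM_lborel_if_finite_slices)
  show "{x \<in> space (chart_space K). f (simplex_chart K x k) = G x} \<in> sets (chart_space K)"
    using f(1) G(1) by (intro borel_measurable_eq measurable_compose[OF measurable_simplex_chart_coord])
  fix x :: "nat \<Rightarrow> real"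
  have "{t. x(i := t) \<in> {x \<in> space (chart_space K). f (simplex_chart K x k) = G x}}
      \<subseteq> (\<lambda>t. simplex_chart K (x(i := t)) k) -` {s. f s = G x}"
    using G(2) by auto
  moreover have "finite ((\<lambda>t. simplex_chart K (x(i := t)) k) -` {s. f s = G x})"
    using f(2) inj_simplex_chart_upd[OF i] by (rule finite_vimageI)
  ultimately show "finite {t. x(i := t) \<in> {x \<in> space (chart_space K). f (simplex_chart K x k) = G x}}"
    by (rule finite_subset)
qed (use i in auto)

lemma simplex_null_boundary_or_level_set:
  fixes f g :: "real \<Rightarrow> real"
  assumes K: "3 \<le> K" and ab: "a < K" "b < K - 1" "a \<noteq> b"
    and f: "f \<in> borel_measurable borel" "\<And>c. finite {t. f t = c}"
    and g: "g \<in> borel_measurable borel"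
  shows "simplex_null K {p \<in> prob_simplex K. (\<exists>k<K. p k = 0) \<or> f (p a) = g (p b)}"
proof -
  define Z where "Z k = {x \<in> space (chart_space K). simplex_chart K x k = 0}" for k
  define V where "V = {x \<in> space (chart_space K). f (simplex_chart K x a) = g (simplex_chart K x b)}"
  have Z: "Z k \<in> null_sets (chart_space K)" if "k < K" for k
    unfolding Z_def using K that
    by (intro null_sets_simplex_chart_level_set[where f = "\<lambda>t. t" and G = "\<lambda>_. 0"
        and i = "if k < K - 1 then k else 0"]) auto
  obtain i where i: "i < K - 1" "i \<noteq> b" "a = i \<or> a = K - 1"
  proof (cases "a < K - 1")
    case False
    show ?thesis by (rule that[of "if b = 0 then 1 else 0"]) (use False ab K in auto)
  qed (use that ab in blast)
  have V: "V \<in> null_sets (chart_space K)"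
    unfolding V_def using i(1,3) f
  proof (rule null_sets_simplex_chart_level_set)
    show "(\<lambda>x. g (simplex_chart K x b)) \<in> borel_measurable (chart_space K)"
      using g by (rule measurable_compose[OF measurable_simplex_chart_coord])
    show "g (simplex_chart K (x(i := t)) b) = g (simplex_chart K x b)" for x t
      using i(2) ab(2) by (simp add: simplex_chart_upd_other)
  qed
  have "{x \<in> space (chart_space K). simplex_chart K x \<in>
      {p \<in> prob_simplex K. (\<exists>k<K. p k = 0) \<or> f (p a) = g (p b)}}
      = (\<Inter>j<K. {x \<in> space (chart_space K). 0 \<le> simplex_chart K x j}) \<inter> ((\<Union>k<K. Z k) \<union> V)"
    using K by (auto simp: simplex_chart_in_prob_simplex Z_def V_def)
  also have "\<dots> \<in> null_sets (chart_space K)"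
  proof (rule null_set_Int1)
    show "(\<Union>k<K. Z k) \<union> V \<in> null_sets (chart_space K)"
      using Z V by (intro null_sets.Un null_sets_UN') auto
    show "(\<Inter>j<K. {x \<in> space (chart_space K). 0 \<le> simplex_chart K x j}) \<in> sets (chart_space K)"
      using K by (intro sets.finite_INT borel_measurable_le measurable_simplex_chart_coord measurable_const)
        (auto simp: lessThan_empty_iff)
  qed
  finally show ?thesis unfolding simplex_null_def .
qed

section \<open>Minimising over the simplex\<close>

lemma compact_prob_simplex: "compact (prob_simplex K)"
proof -
  define S where "S i = (if i < K then {0..1} else {0::real})" for i :: nat
  have "compactin (product_topology (\<lambda>_. euclidean) UNIV) (Pi\<^sub>E UNIV S)"
    by (subst compactin_PiE) (auto simp: S_def)
  then have box: "compact (Pi\<^sub>E UNIV S)" by (simp add: euclidean_product_topology)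
  have "prob_simplex K = (\<Inter>i<K. {f. 0 \<le> f i}) \<inter> (\<Inter>i\<in>{K..}. {f. f i = 0}) \<inter> {f. (\<Sum>i<K. f i) = 1}"
    by (auto simp: prob_simplex_def)
  also have "closed \<dots>"
    by (intro closed_Int closed_INT ballI closed_Collect_le closed_Collect_eq continuous_intros
        continuous_on_product_coordinates)
  finally have "closed (prob_simplex K)" .
  moreover have "prob_simplex K \<subseteq> Pi\<^sub>E UNIV S"
  proof
    fix f assume f: "f \<in> prob_simplex K"
    have "f i \<le> 1" if "i < K" for i
      using f that member_le_sum[of i "{..<K}" f] by (auto simp: prob_simplex_def)
    then show "f \<in> Pi\<^sub>E UNIV S" using f by (auto simp: prob_simplex_def S_def)
  qed
  ultimately show ?thesis using compact_Int_closed[OF box] by (metis inf.absorb_iff2)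
qed

lemma L_N_attains_min:
  assumes "p \<in> prob_simplex K"
  shows "\<exists>q\<in>prob_simplex K. \<forall>r\<in>prob_simplex K. L_N K N e p q \<le> L_N K N e p r"
proof (rule continuous_attains_inf[OF compact_prob_simplex])
  show "prob_simplex K \<noteq> {}" using assms by blast
  have "continuous_on (prob_simplex K) (\<lambda>q. \<Sum>k<K. p k * poly (bernstein_poly N (e k)) (q k))"
    by (intro continuous_intros continuous_on_subset[OF continuous_on_product_coordinates] subset_UNIV)
  then show "continuous_on (prob_simplex K) (L_N K N e p)"
    by (rule continuous_on_cong[THEN iffD1, rotated 2])
      (simp_all add: L_N_eq_sum_bernstein_poly prob_simplex_def)
qed

lemma DERIV_nonzero_imp_not_min:
  fixes \<phi> :: "real \<Rightarrow> real"
  assumes "DERIV \<phi> x :> D" "D \<noteq> 0" "a < x" "x < b"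
  shows "\<exists>s\<in>{a..b}. \<phi> s < \<phi> x"
proof (rule ccontr)
  assume "\<not> (\<exists>s\<in>{a..b}. \<phi> s < \<phi> x)"
  then have "\<forall>s. \<bar>x - s\<bar> < min (x - a) (b - x) \<longrightarrow> \<phi> x \<le> \<phi> s"
    by (auto simp: not_less abs_less_iff)
  then have "D = 0"
    using assms(3,4) by (intro DERIV_local_min[OF assms(1), where d = "min (x - a) (b - x)"]) auto
  then show False using assms(2) by simp
qed

lemma sum_separable_not_min_at_interior:
  fixes f f' :: "nat \<Rightarrow> real \<Rightarrow> real"
  assumes deriv: "\<And>k t. (f k has_real_derivative f' k t) (at t)"
    and p: "p \<in> prob_simplex K" "\<forall>i<K. 0 < p i" and ab: "a < K" "b < K" "a \<noteq> b"
    and gains: "p a * f' a (p a) \<noteq> p b * f' b (p b)"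
  shows "\<exists>q\<in>prob_simplex K. (\<Sum>k<K. p k * f k (q k)) < (\<Sum>k<K. p k * f k (p k))"
proof -
  define c where "c i = (if i = a then 1 else 0) - (if i = b then 1 else 0 :: real)" for i
  define \<phi> where "\<phi> s = (\<Sum>k<K. p k * f k (p k + c k * s))" for s
  have "((\<lambda>s. f k (p k + c k * s)) has_real_derivative f' k (p k) * c k) (at 0)" for k
  proof -
    have "((\<lambda>s. p k + c k * s) has_real_derivative c k) (at 0)"
      by (auto intro!: derivative_eq_intros)
    from DERIV_chain2[OF deriv this] show ?thesis by simp
  qed
  then have "DERIV \<phi> 0 :> (\<Sum>k<K. p k * (f' k (p k) * c k))"
    unfolding \<phi>_def by (intro DERIV_sum DERIV_cmult)
  also have "(\<Sum>k<K. p k * (f' k (p k) * c k)) = p a * f' a (p a) - p b * f' b (p b)"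
    using ab by (simp add: c_def right_diff_distrib sum_subtractf if_distrib[of "\<lambda>x. _ * x"] cong: if_cong)
  finally have "DERIV \<phi> 0 :> p a * f' a (p a) - p b * f' b (p b)" .
  then have "\<exists>s\<in>{- p a..p b}. \<phi> s < \<phi> 0"
    using gains p(2) ab by (intro DERIV_nonzero_imp_not_min) auto
  then obtain s where s: "s \<in> {- p a..p b}" "\<phi> s < \<phi> 0" ..
  have "(\<Sum>i<K. c i * s) = 0"
    using ab by (simp add: c_def sum_subtractf flip: sum_distrib_right)
  then have "(\<lambda>i. p i + c i * s) \<in> prob_simplex K"
    using p s ab by (auto simp: prob_simplex_def c_def sum.distrib)
  then show ?thesis using s(2) by (auto simp: \<phi>_def)
qed

lemma L_star_attained_below_L_same:
  assumes p: "p \<in> prob_simplex K" "\<forall>i<K. 0 < p i" and ab: "a < K" "b < K" "a \<noteq> b"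
    and gains: "p a * poly (pderiv (bernstein_poly N (e a))) (p a)
      \<noteq> p b * poly (pderiv (bernstein_poly N (e b))) (p b)"
  shows "\<exists>q. q \<in> prob_simplex K \<and> q \<noteq> p \<and> L_N K N e p q = L_star K N e p
    \<and> L_star K N e p < L_same K N e p"
proof -
  have sum_p: "(\<Sum>i<K. p i) = 1" using p(1) by (simp add: prob_simplex_def)
  obtain q' where q': "q' \<in> prob_simplex K" "L_N K N e p q' < L_N K N e p p"
    using sum_separable_not_min_at_interior[where f = "\<lambda>k. poly (bernstein_poly N (e k))",
        OF poly_DERIV p ab gains]
    by (auto simp: L_N_eq_sum_bernstein_poly sum_p prob_simplex_def)
  obtain q where q: "q \<in> prob_simplex K" "\<forall>r\<in>prob_simplex K. L_N K N e p q \<le> L_N K N e p r"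
    using L_N_attains_min[OF p(1)] by blast
  then have "L_star K N e p = L_N K N e p q"
    unfolding L_star_def by (intro cInf_eq_minimum) auto
  moreover have "L_N K N e p q < L_N K N e p p" using q(2) q' by force
  ultimately show ?thesis using q(1) by (auto simp: L_same_def)
qed

theorem corollary7p4:
  fixes K N :: nat and e :: "nat \<Rightarrow> nat \<Rightarrow> real"
  assumes "K \<ge> 3" and "N \<ge> 1"
    and "\<exists>k<K. \<exists>a\<in>{1..N}. \<exists>b\<in>{1..N}. e k a \<noteq> e k b"
  shows "\<exists>U. U \<subseteq> prob_simplex K \<and> simplex_null K U \<and>
           (\<forall>p\<in>prob_simplex K - U. \<exists>q. q \<in> prob_simplex K \<and> q \<noteq> p \<and>
              L_N K N e p q = L_star K N e p \<and> L_star K N e p < L_same K N e p)"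
proof -
  obtain a m m' where a: "a < K" and m: "m \<in> {1..N}" "m' \<in> {1..N}" "e a m \<noteq> e a m'"
    using assms(3) by blast
  define gain where "gain k t = t * poly (pderiv (bernstein_poly N (e k))) t" for k t
  have "pderiv (bernstein_poly N (e a)) \<noteq> 0"
    using m by (intro pderiv_bernstein_poly_nonzero) auto
  then have level_sets: "finite {t. gain a t = c}" for c
    unfolding gain_def by (rule finite_level_set_x_mult_poly)
  have gain_measurable: "gain k \<in> borel_measurable borel" for k
    unfolding gain_def by (intro borel_measurable_continuous_onI continuous_intros)
  obtain b where b: "b < K - 1" "a \<noteq> b"
    by (rule that[of "if a = 0 then 1 else 0"]) (use assms(1) in auto)
  define U where "U = {p \<in> prob_simplex K. (\<exists>k<K. p k = 0) \<or> gain a (p a) = gain b (p b)}"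
  have "simplex_null K U"
    unfolding U_def using assms(1) a b gain_measurable level_sets gain_measurable
    by (rule simplex_null_boundary_or_level_set)
  moreover have "\<exists>q. q \<in> prob_simplex K \<and> q \<noteq> p \<and> L_N K N e p q = L_star K N e p
      \<and> L_star K N e p < L_same K N e p" if p: "p \<in> prob_simplex K - U" for p
  proof (rule L_star_attained_below_L_same)
    show "\<forall>i<K. 0 < p i" using p by (force simp: U_def prob_simplex_def less_le)
    show "p a * poly (pderiv (bernstein_poly N (e a))) (p a)
      \<noteq> p b * poly (pderiv (bernstein_poly N (e b))) (p b)"
      using p by (simp add: U_def gain_def)
  qed (use p a b in auto)
  moreover have "U \<subseteq> prob_simplex K" by (auto simp: U_def)
  ultimately show ?thesis by blast
qed

end
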